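(* Let $N\ge1$ and suppose the parameter space $\Theta$ of the correlated Bernoulli random graph model is nondegenerate and satisfies $\Theta\subseteq\mathcal{R}^o$ (all $\varrho_i=0$). Then the statistic $$\mathfrak{d}_{X,Y}\left(1-\mathfrak{d}_{X,Y}\right)-\frac{1}{2N}\left(1-\frac{1}{2N}\right)\Delta$$ is the UMVU estimator of $\sigma^2=\frac1N\sum_{i=1}^N(p_i-\mu)^2$, where $\mu=\frac1N\sum_{i=1}^Np_i$.
   Context: Correlated Bernoulli random graph model: fix a positive integer $N$ and let $\mathcal{R}=\{(p_1,\dots,p_N,\varrho_1,\dots,\varrho_N): p_i,\varrho_i\in[0,1]\}$; a parameter space is any $\Theta\subseteq\mathcal{R}$. For $\theta\in\Theta$, the pairs $(X_i,Y_i)$, $i=1,\dots,N$, of $\{0,1\}$-valued random variables are independent, $X_i,Y_i$ are marginally Bernoulli$(p_i)$ with Pearson correlation $\varrho_i$. Sample space $\mathcal{X}=\{(x,y):x,y\in\{0,1\}^N\}$. Let $\mathcal{R}^o=\{(p_1,\dots,p_N,0,\dots,0):p_i\in\mathbb{R}\}$; $\Theta$ is nondegenerate if $\Theta\cap\mathcal{R}^o$ has an interior point relative to $\mathcal{R}^o$. Statistics: $\mathfrak{d}_X=\frac1N\sum_iX_i$, $\mathfrak{d}_Y=\frac1N\sum_iY_i$, $\mathfrak{d}_{X,Y}=\frac12(\mathfrak{d}_X+\mathfrak{d}_Y)$, and $\Delta=\sum_{i=1}^N(X_i-Y_i)^2$ (number of coordinates where $x$ and $y$ disagree). UMVU means unbiased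 (expectation equals the target for every $\theta\in\Theta$) with minimum variance among all unbiased estimators for every $\theta\in\Theta$. *)

theory Defs
  imports "HOL-Analysis.Analysis"
begin

text \<open>Parameters are pairs (p, rho) of functions nat => real; only indices i < N matter,
  and we normalise them to be 0 for i >= N. Samples are pairs (x, y) of functions
  nat => bool (x i = True meaning X_i = 1), normalised to False for i >= N.\<close>

definition param_space_R :: "nat \<Rightarrow> ((nat \<Rightarrow> real) \<times> (nat \<Rightarrow> real)) set" where
  "param_space_R N = {(p, r). (\<forall>i<N. 0 \<le> p i \<and> p i \<le> 1 \<and> 0 \<le> r i \<and> r i \<le> 1)
                              \<and> (\<forall>i\<ge>N. p i = 0 \<and> r i = 0)}"

definition param_space_Ro :: "nat \<Rightarrow> ((nat \<Rightarrow> real) \<times> (nat \<Rightarrow> real)) set" where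
  "param_space_Ro N = {(p, r). (\<forall>i. r i = 0) \<and> (\<forall>i\<ge>N. p i = 0)}"

text \<open>Theta \<inter> R^o has an interior point relative to R^o (identified with R^N via p).\<close>
definition nondegenerate :: "nat \<Rightarrow> ((nat \<Rightarrow> real) \<times> (nat \<Rightarrow> real)) set \<Rightarrow> bool" where
  "nondegenerate N \<Theta> \<longleftrightarrow>
     (\<exists>p0 e. (p0, (\<lambda>_. 0)) \<in> param_space_Ro N \<and> e > 0 \<and>
        (\<forall>p. (p, (\<lambda>_. 0)) \<in> param_space_Ro N \<and> (\<forall>i<N. \<bar>p i - p0 i\<bar> < e)
             \<longrightarrow> (p, (\<lambda>_. 0)) \<in> \<Theta>))"

definition sample_space :: "nat \<Rightarrow> ((nat \<Rightarrow> bool) \<times> (nat \<Rightarrow> bool)) set" where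
  "sample_space N = {(x, y). \<forall>i\<ge>N. x i = False \<and> y i = False}"

text \<open>Joint pmf of a pair (X,Y) of Bernoulli(p) variables with Pearson correlation r.\<close>
definition pair_pmf :: "real \<Rightarrow> real \<Rightarrow> bool \<Rightarrow> bool \<Rightarrow> real" where
  "pair_pmf p r a b =
     (if a \<and> b then p^2 + r * p * (1 - p)
      else if \<not> a \<and> \<not> b then (1 - p)^2 + r * p * (1 - p)
      else p * (1 - p) * (1 - r))"

definition model_prob ::
  "nat \<Rightarrow> ((nat \<Rightarrow> real) \<times> (nat \<Rightarrow> real)) \<Rightarrow> ((nat \<Rightarrow> bool) \<times> (nat \<Rightarrow> bool)) \<Rightarrow> real" where
  "model_prob N \<theta> s = (\<Prod>i<N. pair_pmf (fst \<theta> i) (snd \<theta> i) (fst s i) (snd s i))"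

definition expect ::
  "nat \<Rightarrow> ((nat \<Rightarrow> real) \<times> (nat \<Rightarrow> real)) \<Rightarrow> (((nat \<Rightarrow> bool) \<times> (nat \<Rightarrow> bool)) \<Rightarrow> real) \<Rightarrow> real" where
  "expect N \<theta> T = (\<Sum>s\<in>sample_space N. T s * model_prob N \<theta> s)"

definition variance_of ::
  "nat \<Rightarrow> ((nat \<Rightarrow> real) \<times> (nat \<Rightarrow> real)) \<Rightarrow> (((nat \<Rightarrow> bool) \<times> (nat \<Rightarrow> bool)) \<Rightarrow> real) \<Rightarrow> real" where
  "variance_of N \<theta> T = expect N \<theta> (\<lambda>s. (T s - expect N \<theta> T)^2)"

definition unbiased ::
  "nat \<Rightarrow> ((nat \<Rightarrow> real) \<times> (nat \<Rightarrow> real)) set \<Rightarrow> (((nat \<Rightarrow> bool) \<times> (nat \<Rightarrow> bool)) \<Rightarrow> real)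
   \<Rightarrow> (((nat \<Rightarrow> real) \<times> (nat \<Rightarrow> real)) \<Rightarrow> real) \<Rightarrow> bool" where
  "unbiased N \<Theta> T g \<longleftrightarrow> (\<forall>\<theta>\<in>\<Theta>. expect N \<theta> T = g \<theta>)"

definition UMVU ::
  "nat \<Rightarrow> ((nat \<Rightarrow> real) \<times> (nat \<Rightarrow> real)) set \<Rightarrow> (((nat \<Rightarrow> bool) \<times> (nat \<Rightarrow> bool)) \<Rightarrow> real)
   \<Rightarrow> (((nat \<Rightarrow> real) \<times> (nat \<Rightarrow> real)) \<Rightarrow> real) \<Rightarrow> bool" where
  "UMVU N \<Theta> T g \<longleftrightarrow> unbiased N \<Theta> T g \<and>
     (\<forall>T'. unbiased N \<Theta> T' g \<longrightarrow> (\<forall>\<theta>\<in>\<Theta>. variance_of N \<theta> T \<le> variance_of N \<theta> T'))"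

definition dens_X :: "nat \<Rightarrow> ((nat \<Rightarrow> bool) \<times> (nat \<Rightarrow> bool)) \<Rightarrow> real" where
  "dens_X N s = (\<Sum>i<N. of_bool (fst s i)) / real N"

definition dens_Y :: "nat \<Rightarrow> ((nat \<Rightarrow> bool) \<times> (nat \<Rightarrow> bool)) \<Rightarrow> real" where
  "dens_Y N s = (\<Sum>i<N. of_bool (snd s i)) / real N"

definition dens_XY :: "nat \<Rightarrow> ((nat \<Rightarrow> bool) \<times> (nat \<Rightarrow> bool)) \<Rightarrow> real" where
  "dens_XY N s = (dens_X N s + dens_Y N s) / 2"

definition Delta :: "nat \<Rightarrow> ((nat \<Rightarrow> bool) \<times> (nat \<Rightarrow> bool)) \<Rightarrow> real" where
  "Delta N s = (\<Sum>i<N. (of_bool (fst s i) - of_bool (snd s i))^2)"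

definition mu_p :: "nat \<Rightarrow> (nat \<Rightarrow> real) \<Rightarrow> real" where
  "mu_p N p = (\<Sum>i<N. p i) / real N"

definition sigma2_p :: "nat \<Rightarrow> (nat \<Rightarrow> real) \<Rightarrow> real" where
  "sigma2_p N p = (\<Sum>i<N. (p i - mu_p N p)^2) / real N"

end

theory Submission
  imports Defs
begin

(* With all correlations zero, a sample enters the likelihood only through the pair counts
   Z_i = X_i + Y_i, which are independent Binomial(2, p_i), and the estimator T is a function of
   (Z_1, ..., Z_N); its unbiasedness follows from the first two moments of the Z_i.
   Let U be an unbiased estimator of zero. Conditioning on the last coordinate writes E U as a
   quadratic polynomial in p_N; since E U vanishes on an open box of parameters, its coefficients
   vanish, and by induction on N, U sums to zero on every fibre of Z (completeness). Hence U is
   uncorrelated with every function of Z, in particular with T, so every other unbiased estimator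
   T + U has variance Var T + E U^2. *)

type_synonym sample = "(nat \<Rightarrow> bool) \<times> (nat \<Rightarrow> bool)"
type_synonym param = "(nat \<Rightarrow> real) \<times> (nat \<Rightarrow> real)"

definition extend_sample ::
  "nat \<Rightarrow> sample \<Rightarrow> bool \<Rightarrow> bool \<Rightarrow> sample" where
  "extend_sample n s a b = ((fst s)(n := a), (snd s)(n := b))"

lemma sample_space_0: "sample_space 0 = {(\<lambda>_. False, \<lambda>_. False)}"
  unfolding sample_space_def by (auto simp: fun_eq_iff)

lemma sample_space_Suc:
  "sample_space (Suc n) = (\<lambda>(s, a, b). extend_sample n s a b) ` (sample_space n \<times> UNIV)"
proof (intro set_eqI iffI)
  fix t assume t: "t \<in> sample_space (Suc n)"
  let ?s = "((fst t)(n := False), (snd t)(n := False))"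
  have "?s \<in> sample_space n" and "t = extend_sample n ?s (fst t n) (snd t n)"
    using t by (auto simp: sample_space_def extend_sample_def)
  then show "t \<in> (\<lambda>(s, a, b). extend_sample n s a b) ` (sample_space n \<times> UNIV)"
    by (intro image_eqI[where x = "(?s, fst t n, snd t n)"]) auto
qed (auto simp: sample_space_def extend_sample_def)

lemma inj_on_extend_sample:
  "inj_on (\<lambda>(s, a, b). extend_sample n s a b) (sample_space n \<times> UNIV)"
  by (rule inj_on_inverseI
      [where g = "\<lambda>t. (((fst t)(n := False), (snd t)(n := False)), fst t n, snd t n)"])
     (auto simp: sample_space_def extend_sample_def fun_eq_iff)

lemma finite_sample_space: "finite (sample_space n)"
  by (induction n) (simp_all add: sample_space_0 sample_space_Suc)

lemma sum_sample_space_Suc: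
  "(\<Sum>t\<in>sample_space (Suc n). h t) = (\<Sum>s\<in>sample_space n. \<Sum>(a, b)\<in>UNIV. h (extend_sample n s a b))"
  unfolding sample_space_Suc sum.reindex[OF inj_on_extend_sample]
  by (simp add: sum.cartesian_product case_prod_beta)

lemma sum_UNIV_bool_pair:
  fixes h :: "bool \<Rightarrow> bool \<Rightarrow> 'a :: comm_monoid_add"
  shows "(\<Sum>(a, b)\<in>UNIV. h a b) = h False False + h False True + h True False + h True True"
proof -
  have "(UNIV :: (bool \<times> bool) set) = {(False, False), (False, True), (True, False), (True, True)}"
    by auto
  then show ?thesis
    unfolding \<open>UNIV = _\<close> by (simp add: add.assoc)
qed

lemma model_prob_extend_sample:
  "model_prob (Suc n) \<theta> (extend_sample n s a b) =
    model_prob n \<theta> s * pair_pmf (fst \<theta> n) (snd \<theta> n) a b"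
  unfolding model_prob_def extend_sample_def by (simp add: prod.lessThan_Suc)

lemma expect_Suc:
  "expect (Suc n) \<theta> T =
     expect n \<theta> (\<lambda>s. \<Sum>(a, b)\<in>UNIV. T (extend_sample n s a b) * pair_pmf (fst \<theta> n) (snd \<theta> n) a b)"
  unfolding expect_def sum_sample_space_Suc model_prob_extend_sample
  by (simp add: sum_distrib_left case_prod_beta mult_ac)

lemma expect_0: "expect 0 \<theta> T = T (\<lambda>_. False, \<lambda>_. False)"
  by (simp add: expect_def model_prob_def sample_space_0)

lemma expect_mult_const: "expect n \<theta> (\<lambda>s. T s * c) = expect n \<theta> T * c"
  unfolding expect_def sum_distrib_right by (simp add: mult_ac)

lemma expect_add: "expect n \<theta> (\<lambda>s. T s + T' s) = expect n \<theta> T + expect n \<theta> T'"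
  by (simp add: expect_def distrib_right sum.distrib)

lemma expect_diff: "expect n \<theta> (\<lambda>s. T s - T' s) = expect n \<theta> T - expect n \<theta> T'"
  by (simp add: expect_def left_diff_distrib sum_subtractf)

lemma expect_sum: "expect n \<theta> (\<lambda>s. \<Sum>i\<in>I. T i s) = (\<Sum>i\<in>I. expect n \<theta> (T i))"
  unfolding expect_def sum_distrib_right by (rule sum.swap)

lemma sum_pair_pmf: "(\<Sum>(a, b)\<in>UNIV. pair_pmf p r a b) = 1"
  by (simp add: sum_UNIV_bool_pair pair_pmf_def power2_eq_square algebra_simps)

definition coord_expect :: "param \<Rightarrow> nat \<Rightarrow> (bool \<Rightarrow> bool \<Rightarrow> real) \<Rightarrow> real" where
  "coord_expect \<theta> k f = (\<Sum>(a, b)\<in>UNIV. f a b * pair_pmf (fst \<theta> k) (snd \<theta> k) a b)"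

lemma expect_prod_coords:
  assumes "K \<subseteq> {..<n}"
  shows "expect n \<theta> (\<lambda>s. \<Prod>k\<in>K. f k (fst s k) (snd s k)) = (\<Prod>k\<in>K. coord_expect \<theta> k (f k))"
  using assms
proof (induction n arbitrary: K)
  case 0
  then show ?case by (simp add: expect_0)
next
  case (Suc n)
  have fin: "finite K"
    using Suc.prems finite_subset by blast
  have extend: "(\<Prod>k\<in>K'. f k (fst (extend_sample n s a b) k) (snd (extend_sample n s a b) k))
      = (\<Prod>k\<in>K'. f k (fst s k) (snd s k))" if "n \<notin> K'" for K' s a b
    using that by (intro prod.cong) (auto simp: extend_sample_def)
  show ?case
  proof (cases "n \<in> K")
    case True
    have "K - {n} \<subseteq> {..<n}"
      using Suc.prems by auto
    have "expect (Suc n) \<theta> (\<lambda>s. \<Prod>k\<in>K. f k (fst s k) (snd s k))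
        = expect n \<theta> (\<lambda>s. (\<Prod>k\<in>K - {n}. f k (fst s k) (snd s k)) * coord_expect \<theta> n (f n))"
      using True fin
      by (simp add: expect_Suc prod.remove extend coord_expect_def extend_sample_def
          case_prod_beta sum_distrib_left mult_ac)
    also have "\<dots> = (\<Prod>k\<in>K - {n}. coord_expect \<theta> k (f k)) * coord_expect \<theta> n (f n)"
      by (simp add: expect_mult_const Suc.IH \<open>K - {n} \<subseteq> {..<n}\<close>)
    finally show ?thesis
      using True fin by (simp add: prod.remove mult.commute)
  next
    case False
    then have "K \<subseteq> {..<n}"
      using Suc.prems by (auto simp: less_Suc_eq)
    then show ?thesis
      using False
      by (simp add: expect_Suc extend Suc.IH case_prod_beta sum_pair_pmf[unfolded case_prod_beta]
          flip: sum_distrib_left)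
  qed
qed

lemma expect_const: "expect n \<theta> (\<lambda>_. c) = c"
  using expect_prod_coords[of "{}" n \<theta>] expect_mult_const[of n \<theta> "\<lambda>_. 1" c] by simp

lemma model_prob_nonneg: "\<theta> \<in> param_space_R n \<Longrightarrow> 0 \<le> model_prob n \<theta> s"
  unfolding param_space_R_def model_prob_def
  by (intro prod_nonneg) (auto simp: pair_pmf_def)

lemma expect_nonneg: "(\<And>s. 0 \<le> model_prob n \<theta> s) \<Longrightarrow> (\<And>s. 0 \<le> T s) \<Longrightarrow> 0 \<le> expect n \<theta> T"
  unfolding expect_def by (intro sum_nonneg mult_nonneg_nonneg)

lemma UMVU_if_orthogonal_to_zero_estimators:
  assumes "unbiased N \<Theta> T g"
    and "\<And>\<theta> s. \<theta> \<in> \<Theta> \<Longrightarrow> 0 \<le> model_prob N \<theta> s"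
    and "\<And>U \<theta>. (\<And>\<theta>'. \<theta>' \<in> \<Theta> \<Longrightarrow> expect N \<theta>' U = 0) \<Longrightarrow> \<theta> \<in> \<Theta> \<Longrightarrow>
      expect N \<theta> (\<lambda>s. T s * U s) = 0"
  shows "UMVU N \<Theta> T g"
  unfolding UMVU_def
proof (intro conjI allI impI ballI)
  fix T' \<theta> assume T': "unbiased N \<Theta> T' g" and "\<theta> \<in> \<Theta>"
  define U where "U s = T' s - T s" for s
  have U0: "expect N \<theta>' U = 0" if "\<theta>' \<in> \<Theta>" for \<theta>'
    using assms(1) T' that unfolding U_def expect_diff unbiased_def by simp
  have "expect N \<theta> U = 0" and "expect N \<theta> (\<lambda>s. T s * U s) = 0"
    using U0 assms(3)[OF U0] \<open>\<theta> \<in> \<Theta>\<close> by blast+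
  have "expect N \<theta> T' = g \<theta>" and "expect N \<theta> T = g \<theta>"
    using assms(1) T' \<open>\<theta> \<in> \<Theta>\<close> by (auto simp: unbiased_def)
  have "(\<lambda>s. (T' s - g \<theta>)^2) =
      (\<lambda>s. (T s - g \<theta>)^2 + T s * U s * 2 - U s * (2 * g \<theta>) + (U s)^2)"
    by (simp add: fun_eq_iff U_def power2_eq_square algebra_simps)
  then have "variance_of N \<theta> T' = variance_of N \<theta> T + expect N \<theta> (\<lambda>s. T s * U s) * 2
      - expect N \<theta> U * (2 * g \<theta>) + expect N \<theta> (\<lambda>s. (U s)^2)"
    unfolding variance_of_def \<open>expect N \<theta> T' = g \<theta>\<close> \<open>expect N \<theta> T = g \<theta>\<close>
    by (simp only: expect_add expect_diff expect_mult_const)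
  also have "\<dots> = variance_of N \<theta> T + expect N \<theta> (\<lambda>s. (U s)^2)"
    using \<open>expect N \<theta> U = 0\<close> \<open>expect N \<theta> (\<lambda>s. T s * U s) = 0\<close> by simp
  also have "\<dots> \<ge> variance_of N \<theta> T"
    using assms(2) \<open>\<theta> \<in> \<Theta>\<close> by (simp add: expect_nonneg)
  finally show "variance_of N \<theta> T \<le> variance_of N \<theta> T'" .
qed (use assms(1) in simp)

lemma expect_coord:
  "k < n \<Longrightarrow> expect n \<theta> (\<lambda>s. f (fst s k) (snd s k)) = coord_expect \<theta> k f"
  using expect_prod_coords[of "{k}" n \<theta> "\<lambda>_. f"] by simp

lemma expect_coord_mult:
  "j < n \<Longrightarrow> k < n \<Longrightarrow> j \<noteq> k \<Longrightarrow>
    expect n \<theta> (\<lambda>s. f (fst s j) (snd s j) * g (fst s k) (snd s k)) =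
      coord_expect \<theta> j f * coord_expect \<theta> k g"
  using expect_prod_coords[of "{j, k}" n \<theta> "\<lambda>i. if i = j then f else g"] by simp

definition pair_count :: "sample \<Rightarrow> nat \<Rightarrow> nat" where
  "pair_count s i = of_bool (fst s i) + of_bool (snd s i)"

lemma dens_XY_pair_count: "dens_XY N s = (\<Sum>i<N. real (pair_count s i)) / (2 * real N)"
  by (simp add: dens_XY_def dens_X_def dens_Y_def pair_count_def sum.distrib add_divide_distrib)

lemma Delta_pair_count: "Delta N s = (\<Sum>i<N. of_bool (pair_count s i = 1))"
  unfolding Delta_def pair_count_def by (intro sum.cong) auto

lemma expect_pair_count:
  "i < n \<Longrightarrow> expect n (p, \<lambda>_. 0) (\<lambda>s. real (pair_count s i)) = 2 * p i"
  unfolding pair_count_def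
  by (subst expect_coord[where f = "\<lambda>a b. real (of_bool a + of_bool b)"])
     (simp_all add: coord_expect_def sum_UNIV_bool_pair pair_pmf_def algebra_simps power2_eq_square)

lemma expect_pair_count_mult:
  assumes "i < n" and "j < n"
  shows "expect n (p, \<lambda>_. 0) (\<lambda>s. real (pair_count s i) * real (pair_count s j))
    = 4 * p i * p j + (if i = j then 2 * p i * (1 - p i) else 0)"
proof (cases "i = j")
  case True
  then show ?thesis
    unfolding pair_count_def True
    by (subst expect_coord
          [where f = "\<lambda>a b. real (of_bool a + of_bool b) * real (of_bool a + of_bool b)"])
       (simp_all add: assms coord_expect_def sum_UNIV_bool_pair pair_pmf_def algebra_simps
         power2_eq_square)
next
  case False
  then show ?thesis
    unfolding pair_count_def
    by (subst expect_coord_mult[where f = "\<lambda>a b. real (of_bool a + of_bool b)"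
          and g = "\<lambda>a b. real (of_bool a + of_bool b)"])
       (simp_all add: assms coord_expect_def sum_UNIV_bool_pair pair_pmf_def algebra_simps
         power2_eq_square)
qed

lemma expect_pair_count_eq_1:
  "i < n \<Longrightarrow> expect n (p, \<lambda>_. 0) (\<lambda>s. of_bool (pair_count s i = 1)) = 2 * p i * (1 - p i)"
  unfolding pair_count_def
  by (subst expect_coord[where f = "\<lambda>a b. of_bool (of_bool a + of_bool b = (1::nat))"])
     (simp_all add: coord_expect_def sum_UNIV_bool_pair pair_pmf_def algebra_simps)

lemma sigma2_p_eq:
  assumes "N \<ge> 1"
  shows "sigma2_p N p = (\<Sum>i<N. p i ^ 2) / real N - mu_p N p ^ 2"
proof -
  let ?\<mu> = "mu_p N p"
  have "(\<Sum>i<N. (p i - ?\<mu>) ^ 2) = (\<Sum>i<N. p i ^ 2) - 2 * ?\<mu> * (\<Sum>i<N. p i) + real N * ?\<mu> ^ 2"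
    by (simp add: power2_diff sum.distrib sum_subtractf sum_distrib_left mult_ac)
  also have "(\<Sum>i<N. p i) = real N * ?\<mu>"
    using assms by (simp add: mu_p_def)
  finally show ?thesis
    using assms by (simp add: sigma2_p_def field_simps power2_eq_square)
qed

lemma expect_sum_pair_count:
  "expect n (p, \<lambda>_. 0) (\<lambda>s. \<Sum>i<n. real (pair_count s i)) = 2 * (\<Sum>i<n. p i)"
  by (simp add: expect_sum expect_pair_count sum_distrib_left)

lemma expect_sum_pair_count_squared:
  "expect n (p, \<lambda>_. 0) (\<lambda>s. (\<Sum>i<n. real (pair_count s i))^2)
    = 4 * (\<Sum>i<n. p i)^2 + (\<Sum>i<n. 2 * p i * (1 - p i))"
proof -
  have "expect n (p, \<lambda>_. 0) (\<lambda>s. (\<Sum>i<n. real (pair_count s i))^2)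
      = (\<Sum>i<n. \<Sum>j<n. 4 * p i * p j + (if i = j then 2 * p i * (1 - p i) else 0))"
    by (simp add: power2_eq_square sum_product expect_sum expect_pair_count_mult)
  also have "\<dots> = 4 * (\<Sum>i<n. p i)^2 + (\<Sum>i<n. 2 * p i * (1 - p i))"
    by (simp add: sum.distrib power2_eq_square sum_product sum_distrib_left mult_ac)
  finally show ?thesis .
qed

lemma expect_Delta: "expect n (p, \<lambda>_. 0) (Delta n) = (\<Sum>i<n. 2 * p i * (1 - p i))"
  unfolding Delta_pair_count[abs_def] expect_sum
  by (intro sum.cong refl expect_pair_count_eq_1) simp

definition sigma2_estimator :: "nat \<Rightarrow> sample \<Rightarrow> real" where
  "sigma2_estimator N s =
     dens_XY N s * (1 - dens_XY N s) - 1 / (2 * real N) * (1 - 1 / (2 * real N)) * Delta N s"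

lemma expect_sigma2_estimator:
  assumes "N \<ge> 1"
  shows "expect N (p, \<lambda>_. 0) (sigma2_estimator N) = sigma2_p N p"
proof -
  define S where "S s = (\<Sum>i<N. real (pair_count s i))" for s
  define A where "A = (\<Sum>i<N. p i)"
  define B where "B = (\<Sum>i<N. p i ^ 2)"
  let ?c = "1 / (2 * real N) * (1 - 1 / (2 * real N))"
  have "sigma2_estimator N =
      (\<lambda>s. S s * (1 / (2 * N)) - S s ^ 2 * (1 / (4 * N ^ 2)) - Delta N s * ?c)"
    using assms
    by (simp add: fun_eq_iff sigma2_estimator_def dens_XY_pair_count S_def field_simps
        power2_eq_square)
  then have "expect N (p, \<lambda>_. 0) (sigma2_estimator N) =
      expect N (p, \<lambda>_. 0) S * (1 / (2 * N)) - expect N (p, \<lambda>_. 0) (\<lambda>s. S s ^ 2) * (1 / (4 * N ^ 2))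
      - expect N (p, \<lambda>_. 0) (Delta N) * ?c"
    by (simp only: expect_diff expect_mult_const)
  also have "\<dots> = 2 * A * (1 / (2 * N)) - (4 * A ^ 2 + (2 * A - 2 * B)) * (1 / (4 * N ^ 2))
      - (2 * A - 2 * B) * ?c"
  proof -
    have "(\<Sum>i<N. 2 * p i * (1 - p i)) = 2 * A - 2 * B"
      by (simp add: A_def B_def sum_subtractf sum_distrib_left algebra_simps power2_eq_square)
    then show ?thesis
      unfolding S_def expect_sum_pair_count expect_sum_pair_count_squared expect_Delta A_def
      by simp
  qed
  also have "\<dots> = sigma2_p N p"
    using assms by (simp add: sigma2_p_eq mu_p_def A_def B_def field_simps power2_eq_square)
  finally show ?thesis .
qed

lemma bernstein_quadratic_eq_0:
  fixes A B C c e :: real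
  assumes "e > 0" and "\<And>t. \<bar>t - c\<bar> < e \<Longrightarrow> (1 - t)^2 * A + t * (1 - t) * B + t^2 * C = 0"
  shows "A = 0 \<and> B = 0 \<and> C = 0"
proof -
  let ?q = "[:A, B - 2 * A, A - B + C:]"
  have "poly ?q t = (1 - t)^2 * A + t * (1 - t) * B + t^2 * C" for t
    by (simp add: algebra_simps power2_eq_square)
  then have "{c - e<..<c + e} \<subseteq> {t. poly ?q t = 0}"
    using assms(2) by (auto simp: abs_less_iff)
  moreover have "infinite {c - e<..<c + e}"
    using \<open>e > 0\<close> by simp
  ultimately have "infinite {t. poly ?q t = 0}"
    using finite_subset by blast
  then have "?q = 0"
    using poly_roots_finite by blast
  then show ?thesis
    by simp
qed

lemma expect_cong_param:
  "(\<And>i. i < n \<Longrightarrow> fst \<theta> i = fst \<theta>' i \<and> snd \<theta> i = snd \<theta>' i) \<Longrightarrow> expect n \<theta> T = expect n \<theta>' T"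
  unfolding expect_def model_prob_def
  by (intro sum.cong refl arg_cong2[where f = "(*)"] prod.cong) auto

lemma pair_count_extend_sample:
  "pair_count (extend_sample n s a b) = (pair_count s)(n := of_bool a + of_bool b)"
  by (simp add: fun_eq_iff pair_count_def extend_sample_def)

lemma pair_count_extend_sample_eq_iff:
  assumes "s \<in> sample_space n"
  shows "pair_count (extend_sample n s a b) = w \<longleftrightarrow>
    pair_count s = w(n := 0) \<and> of_bool a + of_bool b = w n"
proof -
  have "pair_count s n = 0"
    using assms by (auto simp: sample_space_def pair_count_def)
  then show ?thesis
    unfolding pair_count_extend_sample by (metis fun_upd_same fun_upd_triv fun_upd_upd)
qed

definition extension_sum ::
  "nat \<Rightarrow> (sample \<Rightarrow> real) \<Rightarrow> nat \<Rightarrow> sample \<Rightarrow> real"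
  where "extension_sum n F k s =
    (\<Sum>(a, b)\<in>UNIV. if of_bool a + of_bool b = k then F (extend_sample n s a b) else 0)"

lemma extension_sum_eq_0: "k > 2 \<Longrightarrow> extension_sum n F k = (\<lambda>_. 0)"
  by (auto simp: fun_eq_iff extension_sum_def intro!: sum.neutral)

lemma expect_Suc_uncorrelated:
  "expect (Suc n) (p, \<lambda>_. 0) F =
     (1 - p n)^2 * expect n (p, \<lambda>_. 0) (extension_sum n F 0)
     + p n * (1 - p n) * expect n (p, \<lambda>_. 0) (extension_sum n F 1)
     + (p n)^2 * expect n (p, \<lambda>_. 0) (extension_sum n F 2)"
proof -
  have pointwise: "(\<lambda>s. \<Sum>(a, b)\<in>UNIV. F (extend_sample n s a b) * pair_pmf (p n) 0 a b)
      = (\<lambda>s. extension_sum n F 0 s * (1 - p n)^2 + extension_sum n F 1 s * (p n * (1 - p n))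
             + extension_sum n F 2 s * (p n)^2)"
    by (simp add: fun_eq_iff extension_sum_def sum_UNIV_bool_pair pair_pmf_def algebra_simps)
  show ?thesis
    unfolding expect_Suc fst_conv snd_conv pointwise expect_add expect_mult_const
    by (simp add: mult_ac)
qed

lemma sum_pair_count_fibre_Suc:
  "(\<Sum>t\<in>{t \<in> sample_space (Suc n). pair_count t = w}. F t) =
    (\<Sum>s\<in>{s \<in> sample_space n. pair_count s = w(n := 0)}. extension_sum n F (w n) s)"
proof -
  have "(\<Sum>t\<in>{t \<in> sample_space (Suc n). pair_count t = w}. F t)
      = (\<Sum>t\<in>sample_space (Suc n). if pair_count t = w then F t else 0)"
    by (simp add: sum.inter_filter finite_sample_space)
  also have "\<dots> = (\<Sum>s\<in>sample_space n.
      if pair_count s = w(n := 0) then extension_sum n F (w n) s else 0)"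
    unfolding sum_sample_space_Suc extension_sum_def
    by (intro sum.cong refl) (simp add: pair_count_extend_sample_eq_iff case_prod_beta)
  also have "\<dots> = (\<Sum>s\<in>{s \<in> sample_space n. pair_count s = w(n := 0)}. extension_sum n F (w n) s)"
    by (simp add: sum.inter_filter finite_sample_space)
  finally show ?thesis .
qed

lemma expect_extension_sum_eq_0_on_box:
  assumes "e > 0"
    and zero: "\<And>p. \<forall>i<Suc n. \<bar>p i - p0 i\<bar> < e \<Longrightarrow> expect (Suc n) (p, \<lambda>_. 0) F = 0"
    and p: "\<forall>i<n. \<bar>p i - p0 i\<bar> < e"
  shows "expect n (p, \<lambda>_. 0) (extension_sum n F k) = 0"
proof -
  let ?E = "\<lambda>k. expect n (p, \<lambda>_. 0) (extension_sum n F k)"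
  have "(1 - t)^2 * ?E 0 + t * (1 - t) * ?E 1 + t^2 * ?E 2 = 0" if t: "\<bar>t - p0 n\<bar> < e" for t
  proof -
    have "\<forall>i<Suc n. \<bar>(p(n := t)) i - p0 i\<bar> < e"
      using p t by (auto simp: less_Suc_eq)
    then have "expect (Suc n) (p(n := t), \<lambda>_. 0) F = 0"
      by (rule zero)
    moreover have "expect n (p(n := t), \<lambda>_. 0) (extension_sum n F k) = ?E k" for k
      by (rule expect_cong_param) simp
    ultimately show ?thesis
      by (simp add: expect_Suc_uncorrelated)
  qed
  then have "?E 0 = 0" "?E 1 = 0" "?E 2 = 0"
    using bernstein_quadratic_eq_0[OF \<open>e > 0\<close>] by blast+
  moreover have "k \<le> 2 \<Longrightarrow> k = 0 \<or> k = 1 \<or> k = 2"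
    by arith
  ultimately show ?thesis
    by (cases "k \<le> 2") (auto simp: extension_sum_eq_0 expect_const)
qed

lemma pair_count_complete_on_box:
  assumes "e > 0"
    and "\<And>p. \<forall>i<n. \<bar>p i - p0 i\<bar> < e \<Longrightarrow> expect n (p, \<lambda>_. 0) F = 0"
  shows "(\<Sum>s\<in>{s \<in> sample_space n. pair_count s = w}. F s) = 0"
  using assms(2)
proof (induction n arbitrary: F w)
  case 0
  then have "F (\<lambda>_. False, \<lambda>_. False) = 0"
    by (simp add: expect_0)
  then show ?case
    by (simp add: sample_space_0)
next
  case (Suc n)
  have "(\<Sum>s\<in>{s \<in> sample_space n. pair_count s = w'}. extension_sum n F k s) = 0" for k w'
    using expect_extension_sum_eq_0_on_box[OF \<open>e > 0\<close> Suc.prems] by (rule Suc.IH)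
  then show ?case
    by (simp add: sum_pair_count_fibre_Suc)
qed

lemma pair_count_complete:
  assumes "nondegenerate N \<Theta>" and "\<And>\<theta>. \<theta> \<in> \<Theta> \<Longrightarrow> expect N \<theta> U = 0"
  shows "(\<Sum>s\<in>{s \<in> sample_space N. pair_count s = w}. U s) = 0"
proof -
  obtain p0 e where "e > 0" and box: "\<And>p. (p, \<lambda>_. 0) \<in> param_space_Ro N \<Longrightarrow>
      \<forall>i<N. \<bar>p i - p0 i\<bar> < e \<Longrightarrow> (p, \<lambda>_. 0) \<in> \<Theta>"
    using assms(1) unfolding nondegenerate_def by blast
  have "expect N (p, \<lambda>_. 0) U = 0" if p: "\<forall>i<N. \<bar>p i - p0 i\<bar> < e" for p
  proof -
    (* Points of \<Theta> vanish beyond N, while the expectation only sees p i for i < N. *)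
    define q where "q i = (if i < N then p i else 0)" for i
    have "(q, \<lambda>_. 0) \<in> \<Theta>"
      using p by (intro box) (auto simp: q_def param_space_Ro_def)
    then have "expect N (q, \<lambda>_. 0) U = 0"
      by (rule assms(2))
    moreover have "expect N (q, \<lambda>_. 0) U = expect N (p, \<lambda>_. 0) U"
      by (rule expect_cong_param) (simp add: q_def)
    ultimately show ?thesis
      by simp
  qed
  then show ?thesis
    by (rule pair_count_complete_on_box[OF \<open>e > 0\<close>])
qed

lemma sum_mult_eq_0_if_fibre_sums_eq_0:
  fixes u :: "'a \<Rightarrow> 'b :: comm_ring"
  assumes "finite A" and "\<And>w. (\<Sum>x\<in>{x \<in> A. f x = w}. u x) = 0"
    and "\<And>x y. f x = f y \<Longrightarrow> h x = h y"
  shows "(\<Sum>x\<in>A. h x * u x) = 0"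
proof -
  have fibre: "(\<Sum>x\<in>{x \<in> A. f x = w}. h x * u x) = 0" if w: "w \<in> f ` A" for w
  proof -
    obtain x0 where "f x0 = w"
      using w by blast
    then have "(\<Sum>x\<in>{x \<in> A. f x = w}. h x * u x) = (\<Sum>x\<in>{x \<in> A. f x = w}. h x0 * u x)"
      by (intro sum.cong refl) (metis (mono_tags) assms(3) mem_Collect_eq)
    also have "\<dots> = h x0 * (\<Sum>x\<in>{x \<in> A. f x = w}. u x)"
      by (rule sum_distrib_left[symmetric])
    finally show ?thesis
      by (simp only: assms(2) mult_zero_right)
  qed
  have "(\<Sum>x\<in>A. h x * u x) = (\<Sum>w\<in>f ` A. \<Sum>x\<in>{x \<in> A. f x = w}. h x * u x)"
    by (rule sum.image_gen[OF assms(1)])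
  also have "\<dots> = 0"
    using fibre by simp
  finally show ?thesis .
qed

lemma model_prob_uncorrelated:
  "model_prob n (p, \<lambda>_. 0) s = (\<Prod>i<n. p i ^ pair_count s i * (1 - p i) ^ (2 - pair_count s i))"
  unfolding model_prob_def pair_count_def
  by (intro prod.cong refl) (simp add: pair_pmf_def power2_eq_square)

lemma sigma2_estimator_pair_count_cong:
  "pair_count s = pair_count s' \<Longrightarrow> sigma2_estimator N s = sigma2_estimator N s'"
  by (simp add: sigma2_estimator_def dens_XY_pair_count Delta_pair_count)

lemma expect_mult_eq_0_if_pair_count_cong:
  assumes "\<And>w. (\<Sum>s\<in>{s \<in> sample_space n. pair_count s = w}. U s) = 0"
    and "\<And>s s'. pair_count s = pair_count s' \<Longrightarrow> T s = T s'"
  shows "expect n (p, \<lambda>_. 0) (\<lambda>s. T s * U s) = 0"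
proof -
  have "expect n (p, \<lambda>_. 0) (\<lambda>s. T s * U s) =
      (\<Sum>s\<in>sample_space n. (T s * model_prob n (p, \<lambda>_. 0) s) * U s)"
    by (simp add: expect_def mult_ac)
  also have "\<dots> = 0"
  proof (rule sum_mult_eq_0_if_fibre_sums_eq_0[OF finite_sample_space assms(1)])
    fix s s' assume same_counts: "pair_count s = pair_count s'"
    then show "T s * model_prob n (p, \<lambda>_. 0) s = T s' * model_prob n (p, \<lambda>_. 0) s'"
      using assms(2)[OF same_counts] by (simp add: model_prob_uncorrelated)
  qed
  finally show ?thesis .
qed

theorem corollary2:
  fixes N :: nat and \<Theta> :: "((nat \<Rightarrow> real) \<times> (nat \<Rightarrow> real)) set"
  assumes "N \<ge> 1"
    and "\<Theta> \<subseteq> param_space_R N"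
    and "\<Theta> \<subseteq> param_space_Ro N"
    and "nondegenerate N \<Theta>"
  shows "UMVU N \<Theta>
           (\<lambda>s. dens_XY N s * (1 - dens_XY N s)
                 - 1 / (2 * real N) * (1 - 1 / (2 * real N)) * Delta N s)
           (\<lambda>\<theta>. sigma2_p N (fst \<theta>))"
  unfolding sigma2_estimator_def[symmetric]
proof (rule UMVU_if_orthogonal_to_zero_estimators)
  have uncorrelated: "\<theta> = (fst \<theta>, \<lambda>_. 0)" if "\<theta> \<in> \<Theta>" for \<theta>
    using that assms(3) unfolding param_space_Ro_def by (cases \<theta>) (auto simp: fun_eq_iff)
  show "unbiased N \<Theta> (sigma2_estimator N) (\<lambda>\<theta>. sigma2_p N (fst \<theta>))"
    unfolding unbiased_def using uncorrelated expect_sigma2_estimator[OF assms(1)] by metis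
  show "0 \<le> model_prob N \<theta> s" if "\<theta> \<in> \<Theta>" for \<theta> s
    using that assms(2) model_prob_nonneg by blast
  fix U \<theta> assume zero: "\<And>\<theta>'. \<theta>' \<in> \<Theta> \<Longrightarrow> expect N \<theta>' U = 0" and "\<theta> \<in> \<Theta>"
  have "expect N (fst \<theta>, \<lambda>_. 0) (\<lambda>s. sigma2_estimator N s * U s) = 0"
    using expect_mult_eq_0_if_pair_count_cong[OF pair_count_complete[OF assms(4) zero]
        sigma2_estimator_pair_count_cong] .
  then show "expect N \<theta> (\<lambda>s. sigma2_estimator N s * U s) = 0"
    using uncorrelated[OF \<open>\<theta> \<in> \<Theta>\<close>] by metis
qed

end
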